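(* Let $n,m\ge1$ and identify $n$-bit strings with elements of $\mathbb{F}_{2^n}$, with addition $\oplus$ (bitwise XOR) and field multiplication $*$; for a bit $d$ and $b\in\mathbb{F}_{2^n}$ let $d\cdot b$ be $0$ if $d=0$ and $b$ if $d=1$. Let $B_1,\dots,B_m$ be independent uniformly random elements of $\mathbb{F}_{2^n}$ (honest Bob's challenges), and let $R_A$ be a random variable on a finite set, independent of $(B_1,\dots,B_m)$. A classical cheating strategy of Alice is a collection of deterministic functions with values in $\mathbb{F}_{2^n}$ giving her messages $Y_1=f_1(R_A,B_1)$; for $2\le k\le m$, $Y_k^{(d)}=f_k(R_A,B_1,\dots,B_{k-2},B_k,d)$; and $Y_{m+1}^{(d)}=f_{m+1}(R_A,B_1,\dots,B_{m-1},d)$, where $d\in\{0,1\}$ is the bit she attempts to unveil. Let $H_d$ be the event $$Y^{(d)}_{m+1}=\bigoplus_{j=1}^{m}\Big(\prod_{i=j+1}^{m}B_i\Big)*Y^{(d)}_j\ \oplus\ d\cdot\prod_{i=1}^{m}B_i,$$ where $Y^{(d)}_1:=Y_1$, products are taken with $*$ and the empty product is $1$, and let $p_d=\Pr[H_d]$. Then for every such strategy, $p_0+p_1\le1+\omega_m$, where $\omega_m$ is the optimal winning probability of the $m$-player multiplication game over $\mathbb{F}_{2^n}$ defined below; i.e. the $(m+1)$-round protocol is $\varepsilon$-binding with $\varepsilon=\omega_m$.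
   Context: Multiplication game: for $r\ge1$ and a finite field $\mathbb{F}_q$, inputs $X_1,\dots,X_r$ are independent uniform on $\mathbb{F}_q$; player $k$ sees all inputs except $X_k$ and outputs $f_k(X_{[r]\setminus\{k\}})$ for some function $f_k:\mathbb{F}_q^{r-1}\to\mathbb{F}_q$; the game is won iff $\prod_{k=1}^rX_k=\sum_{k=1}^rf_k(X_{[r]\setminus\{k\}})$; $\omega_r$ is the maximum winning probability over all choices of $f_1,\dots,f_r$. The protocol: Alice's agents share uniform secrets $a_1,\dots,a_m$; in round 1 Bob sends $b_1$ and Alice returns $y_1=d\cdot b_1\oplus a_1$; in rounds $2\le k\le m$ Bob sends $b_k$ and Alice returns $y_k=(b_k*a_{k-1})\oplus a_k$; in round $m+1$ Alice sends $d$ and $y_{m+1}=a_m$; Bob accepts iff the relation defining $H_d$ holds. Consecutive rounds are space-like separated, so Alice's round-$k$ message cannot depend on $b_{k-1}$, and her round-1 message cannot depend on $d$; this is what the dependencies of the $f_k$ encode. $\varepsilon$-binding means $p_0+p_1\le1+\varepsilon$ for all cheating strategies. *)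

theory Defs
  imports "HOL-Probability.Probability"
begin

text \<open>Player k outputs f k applied to the input with coordinate k erased
  (overwritten by 0), so player k's output cannot depend on X_k but may depend
  arbitrarily on all other inputs.\<close>

definition mult_game_inputs :: "nat \<Rightarrow> (nat \<Rightarrow> 'f::{field,finite}) set" where
  "mult_game_inputs r = PiE {1..r} (\<lambda>_. UNIV)"

definition mult_game_win_prob ::
  "nat \<Rightarrow> (nat \<Rightarrow> (nat \<Rightarrow> 'f::{field,finite}) \<Rightarrow> 'f) \<Rightarrow> real" where
  "mult_game_win_prob r f =
     real (card {x \<in> mult_game_inputs r.
                  (\<Prod>k\<in>{1..r}. x k) = (\<Sum>k\<in>{1..r}. f k (x(k := 0)))})
     / real (card (mult_game_inputs r :: (nat \<Rightarrow> 'f) set))"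

definition mult_game_value :: "'f::{field,finite} itself \<Rightarrow> nat \<Rightarrow> real" where
  "mult_game_value _ r =
     (SUP f :: nat \<Rightarrow> (nat \<Rightarrow> 'f) \<Rightarrow> 'f. mult_game_win_prob r f)"

text \<open>Alice's message in
  round k for the unveiled bit d (True = 1). f1 gives Y_1 = f1(R_A,B_1);
  f k gives Y_k^(d) for 2 <= k <= m+1, with access only to the allowed challenges.\<close>

definition alice_msg ::
  "nat \<Rightarrow> ('r \<Rightarrow> 'f \<Rightarrow> 'f) \<Rightarrow> (nat \<Rightarrow> 'r \<Rightarrow> (nat \<Rightarrow> 'f) \<Rightarrow> bool \<Rightarrow> 'f)
     \<Rightarrow> 'r \<Rightarrow> (nat \<Rightarrow> 'f) \<Rightarrow> bool \<Rightarrow> nat \<Rightarrow> 'f" where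
  "alice_msg m f1 f r b d k =
     (if k = 1 then f1 r (b 1)
      else if k \<le> m then f k r (restrict b ({1..k-2} \<union> {k})) d
      else f (m+1) r (restrict b {1..m-1}) d)"

definition bit_mult :: "bool \<Rightarrow> 'f::field \<Rightarrow> 'f" where
  "bit_mult d x = (if d then x else 0)"

definition accept_event ::
  "nat \<Rightarrow> ('r \<Rightarrow> 'f \<Rightarrow> 'f) \<Rightarrow> (nat \<Rightarrow> 'r \<Rightarrow> (nat \<Rightarrow> 'f) \<Rightarrow> bool \<Rightarrow> 'f)
     \<Rightarrow> bool \<Rightarrow> ('r \<times> (nat \<Rightarrow> 'f::field)) set" where
  "accept_event m f1 f d =
     {(r, b). alice_msg m f1 f r b d (m+1) =
        (\<Sum>j\<in>{1..m}. (\<Prod>i\<in>{j+1..m}. b i) * alice_msg m f1 f r b d j)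
        + bit_mult d (\<Prod>i\<in>{1..m}. b i)}"

definition cheat_prob ::
  "nat \<Rightarrow> 'r pmf \<Rightarrow> ('r \<Rightarrow> 'f::{field,finite} \<Rightarrow> 'f) \<Rightarrow> (nat \<Rightarrow> 'r \<Rightarrow> (nat \<Rightarrow> 'f) \<Rightarrow> bool \<Rightarrow> 'f)
     \<Rightarrow> bool \<Rightarrow> real" where
  "cheat_prob m R f1 f d =
     measure_pmf.prob (pair_pmf R (pmf_of_set (PiE {1..m} (\<lambda>_. (UNIV :: 'f set)))))
       (accept_event m f1 f d)"

end

theory Submission
  imports Defs
begin

text \<open>Fix Alice's randomness and let D j be the difference of her round-j messages for the
  two unveiled bits, so D 1 = 0. Subtracting the acceptance equations of H_0 and H_1 gives
  B_1 * ... * B_m = D (m+1) - (\<Sum>k<m. (B_(k+2) * ... * B_m) * D (k+1)), and because consecutive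
  rounds are space-like separated the k-th summand never depends on B_k. So whenever H_0 and H_1
  both hold, these summands are a winning play of the m-player multiplication game; hence
  Pr[H_0 \<inter> H_1] \<le> \<omega>_m and p_0 + p_1 = Pr[H_0 \<union> H_1] + Pr[H_0 \<inter> H_1] \<le> 1 + \<omega>_m.\<close>

lemma measure_pair_pmf_le:
  assumes "\<And>a. a \<in> set_pmf A \<Longrightarrow> measure_pmf.prob B {b. (a, b) \<in> S} \<le> c"
  shows "measure_pmf.prob (pair_pmf A B) S \<le> c"
proof -
  obtain a where a: "a \<in> set_pmf A" using set_pmf_not_empty[of A] by blast
  have "0 \<le> c" using assms[OF a] measure_nonneg order_trans by blast
  have "emeasure (pair_pmf A B) S = (\<integral>\<^sup>+x. indicator S x \<partial>pair_pmf A B)"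
    by simp
  also have "\<dots> = (\<integral>\<^sup>+a. \<integral>\<^sup>+b. indicator {b. (a, b) \<in> S} b \<partial>B \<partial>A)"
    unfolding nn_integral_pair_pmf' by (simp add: indicator_def)
  also have "\<dots> = (\<integral>\<^sup>+a. emeasure B {b. (a, b) \<in> S} \<partial>A)"
    by simp
  also have "\<dots> \<le> (\<integral>\<^sup>+a. ennreal c \<partial>A)"
    by (intro nn_integral_mono_AE)
      (auto simp: AE_measure_pmf_iff measure_pmf.emeasure_eq_measure intro!: ennreal_leI assms)
  also have "\<dots> = ennreal c" by (simp add: measure_pmf.emeasure_space_1)
  finally show ?thesis
    using \<open>0 \<le> c\<close> by (simp add: measure_pmf.emeasure_eq_measure)
qed

lemma measure_pmf_add_eq_Un_Int:
  "measure_pmf.prob M A + measure_pmf.prob M B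
     = measure_pmf.prob M (A \<union> B) + measure_pmf.prob M (A \<inter> B)"
  using measure_pmf.finite_measure_Union'[of A M B] measure_pmf.finite_measure_Diff'[of B M A]
  by (simp add: Int_commute)

lemma finite_mult_game_inputs: "finite (mult_game_inputs r :: (nat \<Rightarrow> 'f::{field,finite}) set)"
  by (simp add: mult_game_inputs_def finite_PiE)

lemma mult_game_inputs_nonempty: "mult_game_inputs r \<noteq> {}"
  by (simp add: mult_game_inputs_def PiE_eq_empty_iff)

lemma mult_game_win_prob_eq_prob:
  fixes g :: "nat \<Rightarrow> (nat \<Rightarrow> 'f::{field,finite}) \<Rightarrow> 'f"
  shows "mult_game_win_prob r g = measure_pmf.prob (pmf_of_set (mult_game_inputs r))
     {x. (\<Prod>k\<in>{1..r}. x k) = (\<Sum>k\<in>{1..r}. g k (x(k := 0)))}"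
  unfolding mult_game_win_prob_def
  by (simp add: measure_pmf_of_set[OF mult_game_inputs_nonempty finite_mult_game_inputs] Int_def)

lemma mult_game_win_prob_le_1: "mult_game_win_prob r g \<le> 1"
  unfolding mult_game_win_prob_eq_prob by (rule measure_pmf.prob_le_1)

lemma mult_game_win_prob_le_value:
  fixes g :: "nat \<Rightarrow> (nat \<Rightarrow> 'f::{field,finite}) \<Rightarrow> 'f"
  shows "mult_game_win_prob r g \<le> mult_game_value TYPE('f) r"
  unfolding mult_game_value_def
  by (rule cSUP_upper) (auto intro: bdd_aboveI2 mult_game_win_prob_le_1)

definition unveil_difference ::
  "nat \<Rightarrow> ('r \<Rightarrow> 'f \<Rightarrow> 'f) \<Rightarrow> (nat \<Rightarrow> 'r \<Rightarrow> (nat \<Rightarrow> 'f) \<Rightarrow> bool \<Rightarrow> 'f)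
     \<Rightarrow> 'r \<Rightarrow> (nat \<Rightarrow> 'f::field) \<Rightarrow> nat \<Rightarrow> 'f" where
  "unveil_difference m f1 f r b k = alice_msg m f1 f r b True k - alice_msg m f1 f r b False k"

definition game_strategy_of_cheat ::
  "nat \<Rightarrow> ('r \<Rightarrow> 'f \<Rightarrow> 'f) \<Rightarrow> (nat \<Rightarrow> 'r \<Rightarrow> (nat \<Rightarrow> 'f) \<Rightarrow> bool \<Rightarrow> 'f)
     \<Rightarrow> 'r \<Rightarrow> nat \<Rightarrow> (nat \<Rightarrow> 'f) \<Rightarrow> 'f::field" where
  "game_strategy_of_cheat m f1 f r k x =
     (if k = m then unveil_difference m f1 f r x (m + 1)
      else - ((\<Prod>i\<in>{k+2..m}. x i) * unveil_difference m f1 f r x (k + 1)))"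

lemma unveil_difference_first: "unveil_difference m f1 f r b 1 = 0"
  by (simp add: unveil_difference_def alice_msg_def)

lemma game_strategy_of_cheat_erase:
  assumes "1 \<le> k" "k \<le> m"
  shows "game_strategy_of_cheat m f1 f r k (x(k := 0)) = game_strategy_of_cheat m f1 f r k x"
proof (cases "k = m")
  case True
  have "restrict (x(m := 0)) {1..m-1} = restrict x {1..m-1}"
    using assms by (auto simp: restrict_def fun_eq_iff)
  with True show ?thesis
    by (simp add: game_strategy_of_cheat_def unveil_difference_def alice_msg_def)
next
  case False
  have "restrict (x(k := 0)) ({1..k+1-2} \<union> {k+1}) = restrict x ({1..k+1-2} \<union> {k+1})"
    by (auto simp: restrict_def fun_eq_iff)
  moreover have "(\<Prod>i\<in>{k+2..m}. (x(k := 0)) i) = (\<Prod>i\<in>{k+2..m}. x i)"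
    by (rule prod.cong) auto
  ultimately show ?thesis
    using assms False by (simp add: game_strategy_of_cheat_def unveil_difference_def alice_msg_def)
qed

lemma accept_both_difference:
  assumes "(r, b) \<in> accept_event m f1 f False" "(r, b) \<in> accept_event m f1 f True"
  shows "unveil_difference m f1 f r b (m + 1)
     = (\<Sum>j\<in>{1..m}. (\<Prod>i\<in>{j+1..m}. b i) * unveil_difference m f1 f r b j) + (\<Prod>i\<in>{1..m}. b i)"
proof -
  let ?Y = "alice_msg m f1 f r b" and ?c = "\<lambda>j. \<Prod>i\<in>{j+1..m}. b i"
  have "(\<Sum>j\<in>{1..m}. ?c j * unveil_difference m f1 f r b j)
      = (\<Sum>j\<in>{1..m}. ?c j * ?Y True j) - (\<Sum>j\<in>{1..m}. ?c j * ?Y False j)"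
    by (simp add: unveil_difference_def right_diff_distrib sum_subtractf)
  with assms show ?thesis
    by (simp add: accept_event_def bit_mult_def unveil_difference_def)
qed

lemma accept_both_imp_game_won:
  fixes b :: "nat \<Rightarrow> 'f::field"
  assumes "m \<ge> 1"
    and "(r, b) \<in> accept_event m f1 f False" "(r, b) \<in> accept_event m f1 f True"
  shows "(\<Prod>i\<in>{1..m}. b i) = (\<Sum>k\<in>{1..m}. game_strategy_of_cheat m f1 f r k (b(k := 0)))"
proof -
  let ?D = "unveil_difference m f1 f r b" and ?c = "\<lambda>j. \<Prod>i\<in>{j+1..m}. b i"
  obtain m' where m: "m = Suc m'" using assms(1) by (cases m) auto
  have shift: "(\<Sum>k\<in>{1..m'}. h (Suc k)) = (\<Sum>j\<in>{1..m}. h j)" if "h 1 = 0" for h :: "nat \<Rightarrow> 'f"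
  proof -
    have "(\<Sum>j\<in>{1..m}. h j) = h 1 + (\<Sum>j\<in>{Suc 1..Suc m'}. h j)"
      unfolding m by (rule sum.atLeast_Suc_atMost) simp
    also have "\<dots> = (\<Sum>k\<in>{1..m'}. h (Suc k))"
      using that by (simp only: sum.shift_bounds_cl_Suc_ivl add_0_left)
    finally show ?thesis ..
  qed
  have "(\<Sum>k\<in>{1..m}. game_strategy_of_cheat m f1 f r k (b(k := 0)))
      = (\<Sum>k\<in>{1..m'}. game_strategy_of_cheat m f1 f r k b) + game_strategy_of_cheat m f1 f r m b"
    by (simp add: m game_strategy_of_cheat_erase)
  also have "\<dots> = ?D (m + 1) - (\<Sum>k\<in>{1..m'}. ?c (Suc k) * ?D (Suc k))"
    by (simp add: m game_strategy_of_cheat_def sum_negf)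
  also have "(\<Sum>k\<in>{1..m'}. ?c (Suc k) * ?D (Suc k)) = (\<Sum>j\<in>{1..m}. ?c j * ?D j)"
    by (rule shift) (simp only: unveil_difference_first mult_zero_right)
  also have "?D (m + 1) - (\<Sum>j\<in>{1..m}. ?c j * ?D j) = (\<Prod>i\<in>{1..m}. b i)"
    using accept_both_difference[OF assms(2,3)] by simp
  finally show ?thesis ..
qed

lemma accept_both_prob_le_value:
  assumes "m \<ge> 1"
  shows "measure_pmf.prob (pmf_of_set (mult_game_inputs m :: (nat \<Rightarrow> 'f::{field,finite}) set))
           {b. (r, b) \<in> accept_event m f1 f False \<inter> accept_event m f1 f True}
         \<le> mult_game_value TYPE('f) m"
proof -
  let ?P = "pmf_of_set (mult_game_inputs m :: (nat \<Rightarrow> 'f) set)"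
  have "measure_pmf.prob ?P {b. (r, b) \<in> accept_event m f1 f False \<inter> accept_event m f1 f True}
      \<le> measure_pmf.prob ?P
           {x. (\<Prod>k\<in>{1..m}. x k) = (\<Sum>k\<in>{1..m}. game_strategy_of_cheat m f1 f r k (x(k := 0)))}"
    using accept_both_imp_game_won[OF assms] by (intro measure_pmf.finite_measure_mono) auto
  also have "\<dots> \<le> mult_game_value TYPE('f) m"
    using mult_game_win_prob_le_value[of m "game_strategy_of_cheat m f1 f r"]
    unfolding mult_game_win_prob_eq_prob .
  finally show ?thesis .
qed

theorem propositionC2:
  fixes n m :: nat
    and R :: "'r pmf"
    and f1 :: "'r \<Rightarrow> 'f::{field,finite} \<Rightarrow> 'f"
    and f :: "nat \<Rightarrow> 'r \<Rightarrow> (nat \<Rightarrow> 'f) \<Rightarrow> bool \<Rightarrow> 'f"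
  assumes "n \<ge> 1" and "m \<ge> 1"
    and "CARD('f) = 2 ^ n"
    and "finite (set_pmf R)"
  shows "cheat_prob m R f1 f False + cheat_prob m R f1 f True
           \<le> 1 + mult_game_value TYPE('f) m"
proof -
  let ?P = "pair_pmf R (pmf_of_set (mult_game_inputs m :: (nat \<Rightarrow> 'f) set))"
  let ?H = "accept_event m f1 f"
  have "cheat_prob m R f1 f False + cheat_prob m R f1 f True
      = measure_pmf.prob ?P (?H False \<union> ?H True) + measure_pmf.prob ?P (?H False \<inter> ?H True)"
    unfolding cheat_prob_def mult_game_inputs_def[symmetric] by (rule measure_pmf_add_eq_Un_Int)
  also have "\<dots> \<le> 1 + mult_game_value TYPE('f) m"
    by (intro add_mono measure_pmf.prob_le_1 measure_pair_pmf_le accept_both_prob_le_value assms(2))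
  finally show ?thesis .
qed

end
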